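(* For any link amplitudes and any $\mu\in[0,1]$, at an optimal solution of problem (WSR) both users use full power, i.e. $\alpha_1^\star+\beta_1^\star=P$ and $\alpha_2^\star+\beta_2^\star=P$. Moreover, if either user performs block Markov coding ($\alpha_1^\star>0$ or $\alpha_2^\star>0$), the relay uses full power: $k_1^\star\alpha_1^\star+k_2^\star\alpha_2^\star+\beta_3^\star=P$.
   Context: Full-duplex Gaussian two-way relay channel with link amplitudes $g_{ij}\ge0$ (link from node $j$ to node $i$, nodes $1,2,r$) and power $P>0$. With $C(x)=\log(1+x)$ define $J_1=C(g_{r1}^2\beta_1)$, $J_3=C(g_{r2}^2\beta_2)$, $J_5=C(g_{r1}^2\beta_1+g_{r2}^2\beta_2)$, $J_2=C(g_{21}^2P+2g_{21}g_{2r}\sqrt{k_1}\alpha_1+g_{2r}^2k_1\alpha_1+g_{2r}^2\beta_3)$, $J_4=C(g_{12}^2P+2g_{12}g_{1r}\sqrt{k_2}\alpha_2+g_{1r}^2k_2\alpha_2+g_{1r}^2\beta_3)$. Problem (WSR): maximize $\mu R_1+(1-\mu)R_2$ over $R_1,R_2,\alpha_1,\alpha_2,\beta_1,\beta_2,\beta_3,k_1,k_2\ge0$ subject to $R_1\le\min\{J_1,J_2\}$, $R_2\le\min\{J_3,J_4\}$, $R_1+R_2\le J_5$, $\alpha_1+\beta_1\le P$, $\alpha_2+\beta_2\le P$, $k_1\alpha_1+k_2\alpha_2+\beta_3\le P$. Here $\alpha_i$ is user $i$'s power on the block Markov (repeated old message) component, $\beta_i$ its power on the new message, $k_i\alpha_i$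 the relay's power on the coherent repetition of user $i$'s old message, and $\beta_3$ the relay's power on the independently coded bin index. *)

theory Defs
  imports Complex_Main
begin

datatype node = N1 | N2 | Rl

definition C :: "real \<Rightarrow> real" where "C x = ln (1 + x)"

record wsr_point =
  R1 :: real  R2 :: real
  al1 :: real  al2 :: real
  be1 :: real  be2 :: real  be3 :: real
  k1 :: real  k2 :: real

text \<open>g i j is the amplitude of the link from node j to node i.\<close>
definition J1 :: "(node \<Rightarrow> node \<Rightarrow> real) \<Rightarrow> wsr_point \<Rightarrow> real" where
  "J1 g p = C ((g Rl N1)^2 * be1 p)"
definition J3 :: "(node \<Rightarrow> node \<Rightarrow> real) \<Rightarrow> wsr_point \<Rightarrow> real" where
  "J3 g p = C ((g Rl N2)^2 * be2 p)"
definition J5 :: "(node \<Rightarrow> node \<Rightarrow> real) \<Rightarrow> wsr_point \<Rightarrow> real" where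
  "J5 g p = C ((g Rl N1)^2 * be1 p + (g Rl N2)^2 * be2 p)"
definition J2 :: "(node \<Rightarrow> node \<Rightarrow> real) \<Rightarrow> real \<Rightarrow> wsr_point \<Rightarrow> real" where
  "J2 g P p = C ((g N2 N1)^2 * P + 2 * g N2 N1 * g N2 Rl * sqrt (k1 p) * al1 p
                 + (g N2 Rl)^2 * k1 p * al1 p + (g N2 Rl)^2 * be3 p)"
definition J4 :: "(node \<Rightarrow> node \<Rightarrow> real) \<Rightarrow> real \<Rightarrow> wsr_point \<Rightarrow> real" where
  "J4 g P p = C ((g N1 N2)^2 * P + 2 * g N1 N2 * g N1 Rl * sqrt (k2 p) * al2 p
                 + (g N1 Rl)^2 * k2 p * al2 p + (g N1 Rl)^2 * be3 p)"

definition wsr_feasible :: "(node \<Rightarrow> node \<Rightarrow> real) \<Rightarrow> real \<Rightarrow> wsr_point \<Rightarrow> bool" where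
  "wsr_feasible g P p \<longleftrightarrow>
     R1 p \<ge> 0 \<and> R2 p \<ge> 0 \<and> al1 p \<ge> 0 \<and> al2 p \<ge> 0 \<and> be1 p \<ge> 0 \<and> be2 p \<ge> 0 \<and>
     be3 p \<ge> 0 \<and> k1 p \<ge> 0 \<and> k2 p \<ge> 0 \<and>
     R1 p \<le> min (J1 g p) (J2 g P p) \<and> R2 p \<le> min (J3 g p) (J4 g P p) \<and>
     R1 p + R2 p \<le> J5 g p \<and>
     al1 p + be1 p \<le> P \<and> al2 p + be2 p \<le> P \<and>
     k1 p * al1 p + k2 p * al2 p + be3 p \<le> P"

definition wsr_obj :: "real \<Rightarrow> wsr_point \<Rightarrow> real" where
  "wsr_obj \<mu> p = \<mu> * R1 p + (1 - \<mu>) * R2 p"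

definition wsr_optimal :: "(node \<Rightarrow> node \<Rightarrow> real) \<Rightarrow> real \<Rightarrow> real \<Rightarrow> wsr_point \<Rightarrow> bool" where
  "wsr_optimal g P \<mu> p \<longleftrightarrow> wsr_feasible g P p \<and>
     (\<forall>q. wsr_feasible g P q \<longrightarrow> wsr_obj \<mu> q \<le> wsr_obj \<mu> p)"

end

theory Submission
  imports Defs
begin

text \<open>Every rate bound is nondecreasing in the new-message powers \<open>be1, be2, be3\<close>, while the
  objective depends only on the rates. Hence raising each new-message power until its power
  constraint is tight keeps a point feasible and its objective value unchanged, so an optimal
  point can be turned into an optimal point at which all three power constraints are tight.\<close>

lemma C_mono: "0 \<le> x \<Longrightarrow> x \<le> y \<Longrightarrow> C x \<le> C y"
  unfolding C_def by simp

lemma J1_mono: "0 \<le> be1 p \<Longrightarrow> be1 p \<le> be1 q \<Longrightarrow> J1 g p \<le> J1 g q"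
  unfolding J1_def by (rule C_mono) (auto intro: mult_left_mono)

lemma J3_mono: "0 \<le> be2 p \<Longrightarrow> be2 p \<le> be2 q \<Longrightarrow> J3 g p \<le> J3 g q"
  unfolding J3_def by (rule C_mono) (auto intro: mult_left_mono)

lemma J5_mono:
  "0 \<le> be1 p \<Longrightarrow> 0 \<le> be2 p \<Longrightarrow> be1 p \<le> be1 q \<Longrightarrow> be2 p \<le> be2 q \<Longrightarrow> J5 g p \<le> J5 g q"
  unfolding J5_def by (rule C_mono) (auto intro!: add_mono mult_left_mono)

lemma J2_mono:
  assumes "\<forall>i j. 0 \<le> g i j" "0 \<le> P" "0 \<le> k1 p" "0 \<le> al1 p" "0 \<le> be3 p"
    and "be3 p \<le> be3 q" "k1 q = k1 p" "al1 q = al1 p"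
  shows "J2 g P p \<le> J2 g P q"
  unfolding J2_def
  by (rule C_mono) (use assms in \<open>auto intro!: add_mono mult_left_mono add_nonneg_nonneg\<close>)

lemma J4_mono:
  assumes "\<forall>i j. 0 \<le> g i j" "0 \<le> P" "0 \<le> k2 p" "0 \<le> al2 p" "0 \<le> be3 p"
    and "be3 p \<le> be3 q" "k2 q = k2 p" "al2 q = al2 p"
  shows "J4 g P p \<le> J4 g P q"
  unfolding J4_def
  by (rule C_mono) (use assms in \<open>auto intro!: add_mono mult_left_mono add_nonneg_nonneg\<close>)

definition fill_power :: "real \<Rightarrow> wsr_point \<Rightarrow> wsr_point" where
  "fill_power P p =
     p\<lparr>be1 := P - al1 p, be2 := P - al2 p, be3 := P - k1 p * al1 p - k2 p * al2 p\<rparr>"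

lemma fill_power_full_power:
  "al1 (fill_power P p) + be1 (fill_power P p) = P"
  "al2 (fill_power P p) + be2 (fill_power P p) = P"
  "k1 (fill_power P p) * al1 (fill_power P p) + k2 (fill_power P p) * al2 (fill_power P p)
     + be3 (fill_power P p) = P"
  by (simp_all add: fill_power_def)

lemma wsr_obj_fill_power [simp]: "wsr_obj \<mu> (fill_power P p) = wsr_obj \<mu> p"
  by (simp add: wsr_obj_def fill_power_def)

lemma wsr_feasible_fill_power:
  assumes g: "\<forall>i j. 0 \<le> g i j" and "0 \<le> P" and p: "wsr_feasible g P p"
  shows "wsr_feasible g P (fill_power P p)"
proof -
  let ?q = "fill_power P p"
  have nonneg: "0 \<le> be1 p" "0 \<le> be2 p" "0 \<le> be3 p" "0 \<le> k1 p" "0 \<le> k2 p"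
      "0 \<le> al1 p" "0 \<le> al2 p"
    using p unfolding wsr_feasible_def by auto
  have raised: "be1 p \<le> be1 ?q" "be2 p \<le> be2 ?q" "be3 p \<le> be3 ?q"
    using p unfolding wsr_feasible_def fill_power_def by auto
  have same: "k1 ?q = k1 p" "k2 ?q = k2 p" "al1 ?q = al1 p" "al2 ?q = al2 p"
    by (simp_all add: fill_power_def)
  have "J1 g p \<le> J1 g ?q" "J3 g p \<le> J3 g ?q" "J5 g p \<le> J5 g ?q"
    using nonneg raised by (auto intro: J1_mono J3_mono J5_mono)
  moreover have "J2 g P p \<le> J2 g P ?q" "J4 g P p \<le> J4 g P ?q"
    using g \<open>0 \<le> P\<close> nonneg raised same by (auto intro: J2_mono J4_mono)
  ultimately show ?thesis
    using p nonneg raised unfolding wsr_feasible_def by (auto simp: fill_power_def)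
qed

lemma wsr_optimal_fill_power:
  assumes "\<forall>i j. 0 \<le> g i j" and "0 \<le> P" and "wsr_optimal g P \<mu> p"
  shows "wsr_optimal g P \<mu> (fill_power P p)"
  using assms wsr_feasible_fill_power unfolding wsr_optimal_def by simp

theorem lemma1:
  fixes g :: "node \<Rightarrow> node \<Rightarrow> real" and P \<mu> :: real and p :: wsr_point
  assumes "\<forall>i j. g i j \<ge> 0" and "P > 0" and "0 \<le> \<mu>" and "\<mu> \<le> 1"
    and "wsr_optimal g P \<mu> p"
  shows "\<exists>q. wsr_optimal g P \<mu> q \<and> al1 q + be1 q = P \<and> al2 q + be2 q = P \<and>
           (al1 q > 0 \<or> al2 q > 0 \<longrightarrow> k1 q * al1 q + k2 q * al2 q + be3 q = P)"
proof -
  have "wsr_optimal g P \<mu> (fill_power P p)"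
    using assms by (intro wsr_optimal_fill_power) auto
  then show ?thesis
    using fill_power_full_power by blast
qed

end
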